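(* Let $M := \langle X \mid R\rangle$ where $X$ is irredundant, and suppose that $M$ is normalizing, cancellative, and BF. (1) For all $x,y\in X$ there exists $z\in X$ such that $xy =_M zx$. (2) Suppose $X$ is finite and nonempty, $X = \{x_1,\dots,x_n\}$ with $n\in\mathbb{N}^+$. Then for each $a\in\langle X\rangle$ there is a (necessarily unique) word $\nu(a)\in\langle X\rangle$ with $a =_M \nu(a)$, $|a| = |\nu(a)|$, $\nu(a) = x_1^{m_1}\cdots x_n^{m_n}$ with each $m_i\in\mathbb{N}$, and such that $(m_1,\dots,m_n)$ is minimal in the lexicographic order on $\mathbb{N}^n$ among all tuples $(m_1',\dots,m_n')\in\mathbb{N}^n$ with $a =_M x_1^{m_1'}\cdots x_n^{m_n'}$ and $m_1'+\cdots+m_n' = |a|$.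
   Context: For a set $X$, $\langle X\rangle$ is the free monoid on $X$ (identity $1$); $M=\langle X\mid R\rangle$ is the monoid presented by generators $X$ and relations $R\subseteq\langle X\rangle\times\langle X\rangle$. $|a|$ is word length; $a=_M b$ means equal images in $M$. $X$ is irredundant if no proper subset of $X$ generates $M$. $M$ is normalizing if $aM = Ma$ for all $a\in M$; cancellative if $ab=ac$ or $ba=ca$ implies $b=c$. $\mathsf{L}_M(a):=\{|b| : b\in\langle X\rangle,\ b=_M a\}$; $M$ is BF if $\mathsf{L}_M(a)$ is finite for all $a\in\langle X\rangle$. *)

theory Defs
  imports Main
begin

inductive eqM :: "('a list \<times> 'a list) set \<Rightarrow> 'a list \<Rightarrow> 'a list \<Rightarrow> bool" for R where
  rel: "(l, r) \<in> R \<Longrightarrow> eqM R (u @ l @ v) (u @ r @ v)"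
| refl: "eqM R a a"
| sym: "eqM R a b \<Longrightarrow> eqM R b a"
| trans: "eqM R a b \<Longrightarrow> eqM R b c \<Longrightarrow> eqM R a c"

definition generates :: "'a set \<Rightarrow> ('a list \<times> 'a list) set \<Rightarrow> 'a set \<Rightarrow> bool" where
  "generates X R Y \<longleftrightarrow> (\<forall>a\<in>lists X. \<exists>b\<in>lists Y. eqM R a b)"

definition irredundant :: "'a set \<Rightarrow> ('a list \<times> 'a list) set \<Rightarrow> bool" where
  "irredundant X R \<longleftrightarrow> (\<forall>Y. Y \<subset> X \<longrightarrow> \<not> generates X R Y)"

definition normalizing :: "'a set \<Rightarrow> ('a list \<times> 'a list) set \<Rightarrow> bool" where
  "normalizing X R \<longleftrightarrow> (\<forall>a\<in>lists X.
     (\<forall>b\<in>lists X. \<exists>c\<in>lists X. eqM R (a @ b) (c @ a)) \<and>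
     (\<forall>b\<in>lists X. \<exists>c\<in>lists X. eqM R (b @ a) (a @ c)))"

definition cancellative :: "'a set \<Rightarrow> ('a list \<times> 'a list) set \<Rightarrow> bool" where
  "cancellative X R \<longleftrightarrow> (\<forall>a\<in>lists X. \<forall>b\<in>lists X. \<forall>c\<in>lists X.
     (eqM R (a @ b) (a @ c) \<longrightarrow> eqM R b c) \<and> (eqM R (b @ a) (c @ a) \<longrightarrow> eqM R b c))"

definition lengths :: "'a set \<Rightarrow> ('a list \<times> 'a list) set \<Rightarrow> 'a list \<Rightarrow> nat set" where
  "lengths X R a = {length b | b. b \<in> lists X \<and> eqM R b a}"

definition BF :: "'a set \<Rightarrow> ('a list \<times> 'a list) set \<Rightarrow> bool" where
  "BF X R \<longleftrightarrow> (\<forall>a\<in>lists X. finite (lengths X R a))"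

definition pword :: "'a list \<Rightarrow> nat list \<Rightarrow> 'a list" where
  "pword xs ms = concat (map (\<lambda>(x, m). replicate m x) (zip xs ms))"

definition lex_less :: "nat list \<Rightarrow> nat list \<Rightarrow> bool" where
  "lex_less ms ms' \<longleftrightarrow> (ms, ms') \<in> lexord {(i, j). i < j}"

end

theory Submission imports Defs begin

text \<open>
  Let l(a) (max_length) be the maximal length of a word representing a; it is finite by BF and
  superadditive. Hence 1 is the only unit, and by induction on l every element is a product
  of atoms, so irredundancy forces every generator to be an atom. For x, y in X normality
  gives xy = cx; cancellation shows c is not 1, and if c = zc' with c' not 1, moving x to
  the front through z and c' yields y = d1 d2 with both factors nontrivial, contradicting
  atomicity. All hypotheses are invariant under reversing words, so also yx = xz for some z.
  These swaps bubble-sort every word, without changing its length, into the form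
  x_1^m_1 ... x_n^m_n, and among the exponent vectors of fixed length a lexicographically
  least one exists because the lexicographic order is well-founded there.
\<close>

lemma eqM_cong: "eqM R a b \<Longrightarrow> eqM R (u @ a @ v) (u @ b @ v)"
proof (induction rule: eqM.induct)
  case (rel l r u' v')
  then show ?case using eqM.rel[of l r R "u @ u'" "v' @ v"] by simp
qed (blast intro: eqM.intros)+

lemma eqM_append: "eqM R a b \<Longrightarrow> eqM R c d \<Longrightarrow> eqM R (a @ c) (b @ d)"
  using eqM_cong[of R a b "[]" c] eqM_cong[of R c d b "[]"] by (auto intro: eqM.trans)

declare eqM.trans [trans]

lemma normalizingD:
  assumes "normalizing X R" "a \<in> lists X" "b \<in> lists X"
  shows "\<exists>c\<in>lists X. eqM R (a @ b) (c @ a)" "\<exists>c\<in>lists X. eqM R (b @ a) (a @ c)"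
  using assms unfolding normalizing_def by blast+

lemma cancellativeD:
  assumes "cancellative X R" "a \<in> lists X" "b \<in> lists X" "c \<in> lists X"
  shows "eqM R (a @ b) (a @ c) \<Longrightarrow> eqM R b c" "eqM R (b @ a) (c @ a) \<Longrightarrow> eqM R b c"
  using assms unfolding cancellative_def by blast+

definition max_length :: "'a set \<Rightarrow> ('a list \<times> 'a list) set \<Rightarrow> 'a list \<Rightarrow> nat" where
  "max_length X R a = Max (lengths X R a)"

lemma max_length_cong:
  assumes "eqM R a b"
  shows "max_length X R a = max_length X R b"
proof -
  have "eqM R c a \<longleftrightarrow> eqM R c b" for c
    using assms eqM.sym eqM.trans by metis
  then show ?thesis unfolding max_length_def lengths_def by simp
qed

lemma length_le_max_length:
  assumes "BF X R" "a \<in> lists X" "b \<in> lists X" "eqM R b a"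
  shows "length b \<le> max_length X R a"
proof -
  have "finite (lengths X R a)" using assms(1,2) unfolding BF_def by blast
  moreover have "length b \<in> lengths X R a" unfolding lengths_def using assms(3,4) by blast
  ultimately show ?thesis unfolding max_length_def by (rule Max_ge)
qed

lemma max_length_attained:
  assumes "BF X R" "a \<in> lists X"
  obtains b where "b \<in> lists X" "eqM R b a" "length b = max_length X R a"
proof -
  have "finite (lengths X R a)" using assms unfolding BF_def by blast
  moreover have "length a \<in> lengths X R a" unfolding lengths_def using assms(2) eqM.refl by blast
  ultimately have "max_length X R a \<in> lengths X R a" unfolding max_length_def
    using Max_in[of "lengths X R a"] by blast
  then show thesis using that unfolding lengths_def by force
qed

lemma max_length_append:
  assumes "BF X R" "u \<in> lists X" "v \<in> lists X"
  shows "max_length X R u + max_length X R v \<le> max_length X R (u @ v)"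
proof -
  obtain u' where u': "u' \<in> lists X" "eqM R u' u" "length u' = max_length X R u"
    using max_length_attained[OF assms(1,2)] .
  obtain v' where v': "v' \<in> lists X" "eqM R v' v" "length v' = max_length X R v"
    using max_length_attained[OF assms(1,3)] .
  have "length (u' @ v') \<le> max_length X R (u @ v)"
    using assms u' v' by (intro length_le_max_length eqM_append) simp_all
  then show ?thesis using u' v' by simp
qed

lemma max_length_Nil: "BF X R \<Longrightarrow> max_length X R [] = 0"
  using max_length_append[of X R "[]" "[]"] by simp

lemma eqM_Nil_iff:
  assumes "BF X R" "w \<in> lists X"
  shows "eqM R w [] \<longleftrightarrow> w = []"
proof
  assume "eqM R w []"
  then have "length w \<le> max_length X R []"
    using length_le_max_length[OF assms(1) _ assms(2)] by blast
  then show "w = []" using max_length_Nil[OF assms(1)] by simp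
qed (simp add: eqM.refl)

lemma eqM_append_self_conv:
  assumes "cancellative X R" "BF X R" "a \<in> lists X" "u \<in> lists X"
  shows "eqM R (a @ u) a \<longleftrightarrow> u = []"
proof
  assume "eqM R (a @ u) a"
  then have "eqM R u []"
    using cancellativeD(1)[OF assms(1,3,4), of "[]"] by simp
  then show "u = []" using eqM_Nil_iff[OF assms(2,4)] by blast
qed (simp add: eqM.refl)

lemma eqM_append_self_conv2:
  assumes "cancellative X R" "BF X R" "a \<in> lists X" "u \<in> lists X"
  shows "eqM R (u @ a) a \<longleftrightarrow> u = []"
proof
  assume "eqM R (u @ a) a"
  then have "eqM R u []"
    using cancellativeD(2)[OF assms(1,3,4), of "[]"] by simp
  then show "u = []" using eqM_Nil_iff[OF assms(2,4)] by blast
qed (simp add: eqM.refl)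

definition atoms :: "'a set \<Rightarrow> ('a list \<times> 'a list) set \<Rightarrow> 'a set" where
  "atoms X R = {y \<in> X. \<forall>d1\<in>lists X. \<forall>d2\<in>lists X. eqM R [y] (d1 @ d2) \<longrightarrow> d1 = [] \<or> d2 = []}"

lemma max_length_less_of_split:
  assumes "BF X R" "a \<in> lists X" "d1 \<in> lists X" "d2 \<in> lists X" "d1 \<noteq> []" "d2 \<noteq> []"
    and "eqM R a (d1 @ d2)"
  shows "max_length X R d1 < max_length X R a" "max_length X R d2 < max_length X R a"
proof -
  have "max_length X R d1 + max_length X R d2 \<le> max_length X R a"
    using max_length_append[OF assms(1,3,4)] max_length_cong[OF assms(7)] by simp
  moreover have "length d1 \<le> max_length X R d1" "length d2 \<le> max_length X R d2"
    using length_le_max_length[OF assms(1) _ _ eqM.refl] assms(3,4) by blast+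
  moreover have "length d1 > 0" "length d2 > 0" using assms(5,6) by simp_all
  ultimately show "max_length X R d1 < max_length X R a" "max_length X R d2 < max_length X R a"
    by linarith+
qed

lemma generates_atoms:
  assumes "BF X R"
  shows "generates X R (atoms X R)"
  unfolding generates_def
proof
  fix a assume "a \<in> lists X"
  then show "\<exists>b\<in>lists (atoms X R). eqM R a b"
  proof (induction a rule: measure_induct_rule[of "max_length X R"])
    case (less a)
    show ?case
    proof (cases "a \<in> lists (atoms X R)")
      case True
      then show ?thesis by (blast intro: eqM.refl)
    next
      case False
      obtain d1 d2 where d: "d1 \<in> lists X" "d2 \<in> lists X" "d1 \<noteq> []" "d2 \<noteq> []"
        and a_eq: "eqM R a (d1 @ d2)"
      proof (cases a)
        case (Cons y a')
        show thesis
        proof (cases "a' = []")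
          case True
          then have "y \<notin> atoms X R" using False Cons by simp
          then show thesis using that less.prems Cons True unfolding atoms_def by auto
        next
          case False
          then show thesis using that[of "[y]" a'] less.prems Cons by (simp add: eqM.refl)
        qed
      qed (use False in simp)
      note smaller = max_length_less_of_split[OF assms less.prems d a_eq]
      obtain b1 where "b1 \<in> lists (atoms X R)" "eqM R d1 b1" using less.IH[OF smaller(1) d(1)] ..
      moreover obtain b2 where "b2 \<in> lists (atoms X R)" "eqM R d2 b2"
        using less.IH[OF smaller(2) d(2)] ..
      ultimately show ?thesis using a_eq eqM_append[of R d1 b1 d2 b2]
        by (intro bexI[of _ "b1 @ b2"]) (auto intro: eqM.trans)
    qed
  qed
qed

lemma atoms_eq:
  assumes "irredundant X R" "BF X R"
  shows "atoms X R = X"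
proof -
  have "atoms X R \<subseteq> X" unfolding atoms_def by blast
  then show ?thesis using assms generates_atoms unfolding irredundant_def by blast
qed

lemma generator_pass_right:
  assumes "irredundant X R" "normalizing X R" "cancellative X R" "BF X R"
    and "x \<in> X" "y \<in> X"
  shows "\<exists>z\<in>X. eqM R [x, y] [z, x]"
proof -
  note self_conv = eqM_append_self_conv[OF assms(3,4)] eqM_append_self_conv2[OF assms(3,4)]
  have x: "[x] \<in> lists X" and y: "[y] \<in> lists X" using assms(5,6) by simp_all
  obtain c where c: "c \<in> lists X" "eqM R ([x] @ [y]) (c @ [x])"
    using normalizingD(1)[OF assms(2) x y] ..
  have "c \<noteq> []"
    using c self_conv(1)[OF x y] assms(6) by auto
  then obtain z cs where z: "c = z # cs" by (cases c) auto
  have zcs: "[z] \<in> lists X" "cs \<in> lists X" using c(1) z by simp_all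
  have "cs = []"
  proof (rule ccontr)
    assume "cs \<noteq> []"
    obtain d1 where d1: "d1 \<in> lists X" "eqM R ([z] @ [x]) ([x] @ d1)"
      using normalizingD(2)[OF assms(2) x zcs(1)] ..
    obtain d2 where d2: "d2 \<in> lists X" "eqM R (cs @ [x]) ([x] @ d2)"
      using normalizingD(2)[OF assms(2) x zcs(2)] ..
    have "eqM R ([x] @ [y]) ([z] @ cs @ [x])" using c z by simp
    also have "eqM R \<dots> ([z] @ [x] @ d2)" using eqM_cong[OF d2(2), of "[z]" "[]"] by simp
    also have "eqM R \<dots> ([x] @ d1 @ d2)" using eqM_cong[OF d1(2), of "[]" d2] by simp
    finally have "eqM R [y] (d1 @ d2)"
      using cancellativeD(1)[OF assms(3) x y] d1(1) d2(1) by simp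
    then have "d1 = [] \<or> d2 = []"
      using atoms_eq[OF assms(1,4)] assms(6) d1(1) d2(1) unfolding atoms_def by blast
    moreover have "d1 \<noteq> []" using d1(2) self_conv(2)[OF x zcs(1)] by auto
    moreover have "d2 \<noteq> []" using d2(2) self_conv(2)[OF x zcs(2)] \<open>cs \<noteq> []\<close> by auto
    ultimately show False by blast
  qed
  then show ?thesis using c z by auto
qed

definition rev_rel :: "('a list \<times> 'a list) set \<Rightarrow> ('a list \<times> 'a list) set" where
  "rev_rel R = map_prod rev rev ` R"

lemma rev_rel_rev_rel [simp]: "rev_rel (rev_rel R) = R"
  unfolding rev_rel_def by (force simp: image_image)

lemma eqM_rev_rel: "eqM R a b \<Longrightarrow> eqM (rev_rel R) (rev a) (rev b)"
proof (induction rule: eqM.induct)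
  case (rel l r u v)
  then have "(rev l, rev r) \<in> rev_rel R" unfolding rev_rel_def by force
  then show ?case using eqM.rel[of "rev l" "rev r" "rev_rel R" "rev v" "rev u"] by simp
qed (blast intro: eqM.intros)+

lemma eqM_rev_rel_iff: "eqM (rev_rel R) a b \<longleftrightarrow> eqM R (rev a) (rev b)"
  using eqM_rev_rel[of R "rev a" "rev b"] eqM_rev_rel[of "rev_rel R" a b] by auto

lemma rev_in_lists_iff [simp]: "rev a \<in> lists X \<longleftrightarrow> a \<in> lists X"
  by auto

lemma generates_rev_rel: "generates X (rev_rel R) Y \<Longrightarrow> generates X R Y"
  unfolding generates_def eqM_rev_rel_iff by (metis rev_in_lists_iff rev_rev_ident)

lemma irredundant_rev_rel: "irredundant X R \<Longrightarrow> irredundant X (rev_rel R)"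
  unfolding irredundant_def using generates_rev_rel by blast

lemma normalizing_rev_rel:
  assumes "normalizing X R"
  shows "normalizing X (rev_rel R)"
  unfolding normalizing_def eqM_rev_rel_iff
proof (intro ballI conjI)
  fix a b assume "a \<in> lists X" "b \<in> lists X"
  then have ab: "rev a \<in> lists X" "rev b \<in> lists X" by simp_all
  obtain c where "c \<in> lists X" "eqM R (rev b @ rev a) (rev a @ c)"
    using normalizingD(2)[OF assms ab] ..
  then show "\<exists>c\<in>lists X. eqM R (rev (a @ b)) (rev (c @ a))"
    by (intro bexI[of _ "rev c"]) simp_all
  obtain c where "c \<in> lists X" "eqM R (rev a @ rev b) (c @ rev a)"
    using normalizingD(1)[OF assms ab] ..
  then show "\<exists>c\<in>lists X. eqM R (rev (b @ a)) (rev (a @ c))"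
    by (intro bexI[of _ "rev c"]) simp_all
qed

lemma cancellative_rev_rel:
  assumes "cancellative X R"
  shows "cancellative X (rev_rel R)"
  unfolding cancellative_def eqM_rev_rel_iff
  using cancellativeD[OF assms, of "rev _" "rev _" "rev _"] by simp

lemma lengths_rev_rel: "lengths X (rev_rel R) a = lengths X R (rev a)"
  unfolding lengths_def eqM_rev_rel_iff
  by (rule Collect_cong) (metis length_rev rev_in_lists_iff rev_rev_ident)

lemma BF_rev_rel: "BF X R \<Longrightarrow> BF X (rev_rel R)"
  unfolding BF_def lengths_rev_rel by (metis rev_in_lists_iff)

lemma generator_pass_left:
  assumes "irredundant X R" "normalizing X R" "cancellative X R" "BF X R"
    and "x \<in> X" "y \<in> X"
  shows "\<exists>z\<in>X. eqM R [y, x] [x, z]"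
  using generator_pass_right[OF irredundant_rev_rel normalizing_rev_rel cancellative_rev_rel
      BF_rev_rel, OF assms] unfolding eqM_rev_rel_iff by simp

lemma unsorted_adjacent:
  "\<not> sorted (map f a) \<Longrightarrow> \<exists>p y x q. a = p @ y # x # q \<and> f x < f y"
proof (induction a rule: induct_list012)
  case (3 y x q)
  show ?case
  proof (cases "f x < f y")
    case True
    then show ?thesis by (metis append_Nil)
  next
    case False
    then have "\<not> sorted (map f (x # q))"
      using "3.prems" by (metis list.map(2) not_less sorted2)
    then obtain p y' x' q' where "x # q = p @ y' # x' # q'" "f x' < f y'"
      using "3.IH"(2) by blast
    then show ?thesis by (metis append_Cons)
  qed
qed simp_all

text \<open>Bubble sort: each swap makes the word smaller in the lexicographic order of its
  f-values, which is well-founded on words of a fixed length.\<close>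

lemma ex_sorted_eqM:
  fixes f :: "'a \<Rightarrow> nat"
  assumes pass: "\<forall>x\<in>X. \<forall>y\<in>X. \<exists>z\<in>X. eqM R [y, x] [x, z]"
    and "a \<in> lists X"
  shows "\<exists>b\<in>lists X. eqM R a b \<and> length b = length a \<and> sorted (map f b)"
  using wf_lex[OF wf_inv_image[OF wf_less_than, of f]] assms(2)
proof (induction a rule: wf_induct_rule)
  case (less a)
  show ?case
  proof (cases "sorted (map f a)")
    case True
    then show ?thesis using less.prems by (blast intro: eqM.refl)
  next
    case False
    then obtain p y x q where a: "a = p @ y # x # q" and xy: "f x < f y"
      using unsorted_adjacent by blast
    have "x \<in> X" "y \<in> X" using less.prems a by simp_all
    then obtain z where z: "z \<in> X" "eqM R [y, x] [x, z]" using pass by blast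
    define a' where "a' = p @ x # z # q"
    have "eqM R a a'" using eqM_cong[OF z(2), of p q] unfolding a a'_def by simp
    moreover have "(a', a) \<in> lex (inv_image less_than f)"
      unfolding lex_conv a a'_def using xy by auto
    moreover have "a' \<in> lists X" using less.prems z unfolding a a'_def by simp
    ultimately show ?thesis using less.IH[of a'] unfolding a'_def a
      by (auto intro: eqM.trans)
  qed
qed

lemma length_pword: "length ms = length xs \<Longrightarrow> length (pword xs ms) = sum_list ms"
  unfolding pword_def by (induction ms xs rule: list_induct2) auto

lemma distinct_ex_rank:
  "distinct xs \<Longrightarrow> \<exists>f :: 'a \<Rightarrow> nat. sorted_wrt (<) (map f xs)"
proof (induction xs)
  case (Cons x xs)
  then obtain f :: "'a \<Rightarrow> nat" where f: "sorted_wrt (<) (map f xs)" by auto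
  define g where "g z = (if z = x then 0 else Suc (f z))" for z
  have "map g (x # xs) = 0 # map (Suc \<circ> f) xs" using Cons.prems unfolding g_def by auto
  moreover have "sorted_wrt (<) (0 # map (Suc \<circ> f) xs)" using f by (simp add: sorted_wrt_map)
  ultimately show ?case by metis
qed simp

lemma sorted_imp_pword:
  fixes f :: "'a \<Rightarrow> nat"
  assumes "sorted_wrt (<) (map f xs)" "set b \<subseteq> set xs" "sorted (map f b)"
  shows "\<exists>ms. length ms = length xs \<and> b = pword xs ms"
  using assms
proof (induction xs arbitrary: b)
  case Nil
  then show ?case by (simp add: pword_def)
next
  case (Cons x xs)
  define t where "t = takeWhile (\<lambda>z. z = x) b"
  define r where "r = dropWhile (\<lambda>z. z = x) b"
  have b: "b = t @ r" unfolding t_def r_def by simp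
  have t: "t = replicate (length t) x" unfolding t_def
    by (metis (mono_tags, lifting) replicate_length_same set_takeWhileD)
  have sr: "sorted (map f r)" using Cons.prems(3) b by (simp add: sorted_append)
  have "x \<notin> set r"
  proof
    assume "x \<in> set r"
    then obtain h r' where hr: "r = h # r'" by (cases r) auto
    have "h \<noteq> x" using hd_dropWhile[of "\<lambda>z. z = x" b] hr unfolding r_def by auto
    then have "f x < f h" using Cons.prems(1,2) b hr by auto
    moreover have "f h \<le> f x" using sr hr \<open>x \<in> set r\<close> \<open>h \<noteq> x\<close> by auto
    ultimately show False by simp
  qed
  then have "set r \<subseteq> set xs" using Cons.prems(2) b by auto
  then obtain ms where ms: "length ms = length xs" "r = pword xs ms"
    using Cons.IH[of r] Cons.prems(1) sr by auto
  show ?case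
    by (rule exI[of _ "length t # ms"]) (use ms b t in \<open>auto simp: pword_def\<close>)
qed

lemma lex_less_iff_lexord: "lex_less ms ms' \<longleftrightarrow> (ms, ms') \<in> lexord less_than"
proof -
  have "{(i, j). i < j} = (less_than :: (nat \<times> nat) set)" by auto
  then show ?thesis unfolding lex_less_def by simp
qed

lemma lex_less_asym: "lex_less ms ms' \<Longrightarrow> \<not> lex_less ms' ms"
  unfolding lex_less_iff_lexord using lexord_asymmetric[OF asym_less_than] .

lemma lex_less_linear: "lex_less ms ms' \<or> ms = ms' \<or> lex_less ms' ms"
  unfolding lex_less_iff_lexord by (rule lexord_linear) auto

lemma ex1_lex_least:
  assumes "m0 \<in> S" "\<forall>ms\<in>S. length ms = n"
  shows "\<exists>!m. m \<in> S \<and> (\<forall>m'\<in>S. m = m' \<or> lex_less m m')"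
proof -
  obtain m where m: "m \<in> S" and least: "\<And>m'. (m', m) \<in> lex less_than \<Longrightarrow> m' \<notin> S"
    using wfE_min[OF wf_lex[OF wf_less_than] assms(1)] by blast
  have "\<not> lex_less m' m" if "m' \<in> S" for m'
  proof
    assume "lex_less m' m"
    then have "(m', m) \<in> lex less_than"
      using assms(2) that m by (simp add: lex_less_iff_lexord lexord_lex)
    then show False using least that by blast
  qed
  then have min: "m = m' \<or> lex_less m m'" if "m' \<in> S" for m'
    using lex_less_linear[of m m'] that by blast
  show ?thesis
  proof (rule ex1I[of _ m])
    fix m' assume "m' \<in> S \<and> (\<forall>m''\<in>S. m' = m'' \<or> lex_less m' m'')"
    then show "m' = m" using m min[of m'] lex_less_asym by blast
  qed (use m min in blast)
qed

lemma ex1_image: "\<exists>!x. P x \<Longrightarrow> \<exists>!y. \<exists>x. y = f x \<and> P x"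
  by blast

lemma ex1_lex_least_pword:
  assumes pass: "\<forall>x\<in>X. \<forall>y\<in>X. \<exists>z\<in>X. eqM R [y, x] [x, z]"
    and xs: "distinct xs" "set xs = X" and a: "a \<in> lists X"
  shows "\<exists>!\<nu>. \<exists>ms. length ms = length xs \<and> \<nu> = pword xs ms \<and>
            eqM R a \<nu> \<and> length \<nu> = length a \<and>
            (\<forall>ms'. length ms' = length xs \<and> eqM R a (pword xs ms') \<and>
                   sum_list ms' = length a \<longrightarrow> ms = ms' \<or> lex_less ms ms')"
proof -
  define S where "S = {ms. length ms = length xs \<and> eqM R a (pword xs ms) \<and> sum_list ms = length a}"
  obtain f :: "'a \<Rightarrow> nat" where f: "sorted_wrt (<) (map f xs)" using distinct_ex_rank xs(1) by blast
  obtain b where b: "b \<in> lists X" "eqM R a b" "length b = length a" "sorted (map f b)"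
    using ex_sorted_eqM[OF pass a, of f] by blast
  obtain ms where ms: "length ms = length xs" "b = pword xs ms"
    using sorted_imp_pword[OF f _ b(4)] b(1) xs(2) by auto
  then have "ms \<in> S" unfolding S_def using b length_pword[OF ms(1)] by simp
  then have "\<exists>!m. m \<in> S \<and> (\<forall>m'\<in>S. m = m' \<or> lex_less m m')"
    by (intro ex1_lex_least[where n = "length xs"]) (auto simp: S_def)
  then have "\<exists>!\<nu>. \<exists>m. \<nu> = pword xs m \<and> m \<in> S \<and> (\<forall>m'\<in>S. m = m' \<or> lex_less m m')"
    by (rule ex1_image)
  moreover have "(length m = length xs \<and> \<nu> = pword xs m \<and> eqM R a \<nu> \<and> length \<nu> = length a \<and>
      (\<forall>ms'. length ms' = length xs \<and> eqM R a (pword xs ms') \<and> sum_list ms' = length a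
        \<longrightarrow> m = ms' \<or> lex_less m ms'))
    \<longleftrightarrow> \<nu> = pword xs m \<and> m \<in> S \<and> (\<forall>m'\<in>S. m = m' \<or> lex_less m m')" for \<nu> m
    unfolding S_def using length_pword[of m xs] by auto
  ultimately show ?thesis by (simp only:)
qed

theorem lemma5p3:
  fixes X :: "'a set" and R :: "('a list \<times> 'a list) set"
  assumes "R \<subseteq> lists X \<times> lists X"
    and "irredundant X R"
    and "normalizing X R"
    and "cancellative X R"
    and "BF X R"
  shows "(\<forall>x\<in>X. \<forall>y\<in>X. \<exists>z\<in>X. eqM R [x, y] [z, x])
    \<and> (\<forall>xs. distinct xs \<and> set xs = X \<and> xs \<noteq> [] \<longrightarrow>
        (\<forall>a\<in>lists X. \<exists>!\<nu>. \<exists>ms.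
            length ms = length xs \<and> \<nu> = pword xs ms \<and>
            eqM R a \<nu> \<and> length \<nu> = length a \<and>
            (\<forall>ms'. length ms' = length xs \<and> eqM R a (pword xs ms') \<and>
                   sum_list ms' = length a \<longrightarrow> ms = ms' \<or> lex_less ms ms')))"
proof -
  have pass: "\<forall>x\<in>X. \<forall>y\<in>X. \<exists>z\<in>X. eqM R [y, x] [x, z]"
    using generator_pass_left[OF assms(2-5)] by blast
  show ?thesis
  proof (intro conjI allI impI ballI)
    show "\<exists>z\<in>X. eqM R [x, y] [z, x]" if "x \<in> X" "y \<in> X" for x y
      using generator_pass_right[OF assms(2-5) that] .
  qed (rule ex1_lex_least_pword[OF pass]; blast)
qed

end
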